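(* Let $G=(V,E)$ be a finite hypergraph, each hyperedge $e\in E$ having vertex set $N(e)\subseteq V$, let $B\subseteq V$ be a set of boundary vertices, and let $\mathcal{D}$ be a finite set. For each $e\in E$ let $R^e=\{(\delta_x^e,U_x^e,O_x^e)\}_{x\in\mathcal{D}}$ be a hyperedge problem on $N(e)$, with $O_x^e$ acting on $\mathcal{H}^e$. For $v\in V$ write $\delta_x(v)=\sum_{e\in E:\,v\in N(e)}\delta_x^e(v)$. Assume (i) $\delta_x(v)=0$ for all $v\in V\setminus B$ and all $x$, and (ii) there are functions $U_x:V\to\mathbb{C}$ with $U_x^e=U_x|_{N(e)}$ for all $e\in E$, $x\in\mathcal{D}$. For each $e$ let $w^e=\{|(w^e)_x^\pm\rangle\}_{x\in\mathcal{D}}\subseteq\mathcal{H}^e\otimes\mathcal{W}^e$ be a feasible solution to $R^e$, and set $|w_x^\pm\rangle=\bigoplus_{e\in E}|(w^e)_x^\pm\rangle$. Then $w=\{|w_x^\pm\rangle\}_{x\in\mathcal{D}}$ is a feasible solution of the problem $R=\{(\delta_x|_B,\ U_x|_B,\ \bigoplus_{e\in E}O_x^e)\}_{x\in\mathcal{D}}$ on the vertex set $B$, and $\mathsf{R}_x^\pm(w)=\sum_{e\in E}\mathsf{R}_x^\pm(w^e)$ for all $x\in\mathcal{D}$.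
   Context: A state-reflection problem $\{(|\sigma_x^+\rangle,|\sigma_x^-\rangle,O_x)\}_{x\in\mathcal{D}}$ consists of orthogonal vectors $|\sigma_x^\pm\rangle$ in a finite-dimensional space $\mathcal{V}$ and operators $O_x$ on $\mathcal{H}$ with $O_x^2=I$; a feasible solution is a finite-dimensional space $\mathcal{W}$ and vectors $|w_x^s\rangle\in\mathcal{H}\otimes\mathcal{W}$ ($s\in\{+,-\}$) with $\langle\sigma_x^s|\sigma_y^t\rangle-st\langle\sigma_x^s|\sigma_y^t\rangle=\langle w_x^s|((I-O_x^\dagger O_y)\otimes I)|w_y^t\rangle$ for all $x,y\in\mathcal{D}$, $s,t\in\{+,-\}$; its witness sizes are $\mathsf{R}_x^\pm(w)=\||w_x^\pm\rangle\|^2$. A hyperedge problem on a finite set $V'$, written $\{(\delta_x,U_x,O_x)\}_x$, is a state-reflection problem over $\mathbb{C}^{V'}$ with $|\sigma_x^+\rangle=\delta_x$, $|\sigma_x^-\rangle=U_x$, where $\sum_{v}(\delta_x)_v=0$ and $U_x$ is constant on the support of $\delta_x$. The direct sum of the oracles acts on $\bigoplus_e(\mathcal{H}^e\otimes\mathcal{W}^e)$ as $\bigoplus_e(O_x^e\otimes I_{\mathcal{W}^e})$. *)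

theory Defs
  imports Complex_Main
begin

text \<open>Finite-dimensional spaces are modelled by finite index sets (orthonormal bases):
  a vector in C^I is a function I => complex (only values on I matter), an operator on C^I
  is a matrix I => I => complex, and H (x) W has basis I x J. Signs s in {+,-} are booleans
  (True = +).\<close>

definition sg :: "bool \<Rightarrow> complex" where
  "sg s = (if s then 1 else -1)"

definition vinner :: "'i set \<Rightarrow> ('i \<Rightarrow> complex) \<Rightarrow> ('i \<Rightarrow> complex) \<Rightarrow> complex" where
  "vinner I a b = (\<Sum>i\<in>I. cnj (a i) * b i)"

definition adj_mult :: "'h set \<Rightarrow> ('h \<Rightarrow> 'h \<Rightarrow> complex) \<Rightarrow> ('h \<Rightarrow> 'h \<Rightarrow> complex) \<Rightarrow> 'h \<Rightarrow> 'h \<Rightarrow> complex" where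
  "adj_mult HI A C = (\<lambda>i k. \<Sum>j\<in>HI. cnj (A j i) * C j k)"

definition tensor_id_apply :: "'h set \<Rightarrow> ('h \<Rightarrow> 'h \<Rightarrow> complex) \<Rightarrow> ('h \<times> 'w \<Rightarrow> complex) \<Rightarrow> 'h \<times> 'w \<Rightarrow> complex" where
  "tensor_id_apply HI A v = (\<lambda>(i, a). \<Sum>k\<in>HI. A i k * v (k, a))"

definition state_reflection_problem ::
  "'v set \<Rightarrow> 'h set \<Rightarrow> 'x set \<Rightarrow> (bool \<Rightarrow> 'x \<Rightarrow> 'v \<Rightarrow> complex) \<Rightarrow> ('x \<Rightarrow> 'h \<Rightarrow> 'h \<Rightarrow> complex) \<Rightarrow> bool" where
  "state_reflection_problem V' HI D \<sigma> Or \<longleftrightarrow>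
     finite V' \<and> finite HI \<and>
     (\<forall>x\<in>D. vinner V' (\<sigma> True x) (\<sigma> False x) = 0) \<and>
     (\<forall>x\<in>D. \<forall>i\<in>HI. \<forall>k\<in>HI. (\<Sum>j\<in>HI. Or x i j * Or x j k) = (if i = k then 1 else 0))"

definition feasible_solution ::
  "'v set \<Rightarrow> 'h set \<Rightarrow> 'x set \<Rightarrow> (bool \<Rightarrow> 'x \<Rightarrow> 'v \<Rightarrow> complex) \<Rightarrow> ('x \<Rightarrow> 'h \<Rightarrow> 'h \<Rightarrow> complex)
    \<Rightarrow> 'w set \<Rightarrow> (bool \<Rightarrow> 'x \<Rightarrow> 'h \<times> 'w \<Rightarrow> complex) \<Rightarrow> bool" where
  "feasible_solution V' HI D \<sigma> Or WI w \<longleftrightarrow>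
     finite WI \<and>
     (\<forall>x\<in>D. \<forall>y\<in>D. \<forall>s t.
        vinner V' (\<sigma> s x) (\<sigma> t y) - sg s * sg t * vinner V' (\<sigma> s x) (\<sigma> t y)
        = vinner (HI \<times> WI) (w s x)
            (\<lambda>p. tensor_id_apply HI (\<lambda>i k. (if i = k then 1 else 0) - adj_mult HI (Or x) (Or y) i k) (w t y) p))"

definition wsize :: "'h set \<Rightarrow> 'w set \<Rightarrow> ('h \<times> 'w \<Rightarrow> complex) \<Rightarrow> real" where
  "wsize HI WI v = (\<Sum>p\<in>HI \<times> WI. (cmod (v p))\<^sup>2)"

definition hyperedge_problem ::
  "'v set \<Rightarrow> 'h set \<Rightarrow> 'x set \<Rightarrow> ('x \<Rightarrow> 'v \<Rightarrow> complex) \<Rightarrow> ('x \<Rightarrow> 'v \<Rightarrow> complex) \<Rightarrow> ('x \<Rightarrow> 'h \<Rightarrow> 'h \<Rightarrow> complex) \<Rightarrow> bool" where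
  "hyperedge_problem V' HI D \<delta> U Or \<longleftrightarrow>
     state_reflection_problem V' HI D (\<lambda>s. if s then \<delta> else U) Or \<and>
     (\<forall>x\<in>D. (\<Sum>v\<in>V'. \<delta> x v) = 0) \<and>
     (\<forall>x\<in>D. \<forall>u\<in>V'. \<forall>v\<in>V'. \<delta> x u \<noteq> 0 \<longrightarrow> \<delta> x v \<noteq> 0 \<longrightarrow> U x u = U x v)"

text \<open>Direct sums: basis of (+)_e H^e is Sigma E HI, that of (+)_e W^e is Sigma E WI;
  (+)_e (H^e (x) W^e) is the block-diagonal subspace of ((+)_e H^e) (x) ((+)_e W^e),
  on which ((+)_e Or^e) (x) I acts as (+)_e (Or^e (x) I).\<close>
definition dsum_op :: "('e \<Rightarrow> 'x \<Rightarrow> 'h \<Rightarrow> 'h \<Rightarrow> complex) \<Rightarrow> 'x \<Rightarrow> 'e \<times> 'h \<Rightarrow> 'e \<times> 'h \<Rightarrow> complex" where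
  "dsum_op Or x = (\<lambda>(e, i) (e', k). if e = e' then Or e x i k else 0)"

definition dsum_vec :: "('e \<Rightarrow> bool \<Rightarrow> 'x \<Rightarrow> 'h \<times> 'w \<Rightarrow> complex) \<Rightarrow> bool \<Rightarrow> 'x \<Rightarrow> ('e \<times> 'h) \<times> ('e \<times> 'w) \<Rightarrow> complex" where
  "dsum_vec w s x = (\<lambda>((e, i), (e', a)). if e = e' then w e s x (i, a) else 0)"

end

theory Submission
  imports Defs
begin

text \<open>Since s = t kills the left-hand side of the feasibility equation, only the cross terms
  \<open>\<langle>\<delta>\<^sub>x|U\<^sub>y\<rangle>\<close> and \<open>\<langle>U\<^sub>x|\<delta>\<^sub>y\<rangle>\<close> matter. Because \<open>\<delta>\<^sub>x\<close> vanishes off B, is the sum of the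
  \<open>\<delta>\<^sub>x\<^sup>e\<close>, and \<open>U\<^sub>y\<close> restricts to \<open>U\<^sub>y\<^sup>e\<close> on every N(e), these cross terms are the sums over e
  of the corresponding cross terms of the hyperedge problems. On the other side, the direct sum of
  the oracles is block diagonal and the direct-sum witnesses live on the diagonal blocks, so
  \<open>\<langle>w\<^sub>x\<^sup>s|(I - O\<^sub>x\<^sup>\<dagger>O\<^sub>y)\<otimes>I|w\<^sub>y\<^sup>t\<rangle>\<close> and the witness sizes are sums of their blocks too.\<close>

definition gram_defect ::
  "'v set \<Rightarrow> (bool \<Rightarrow> 'x \<Rightarrow> 'v \<Rightarrow> complex) \<Rightarrow> bool \<Rightarrow> 'x \<Rightarrow> bool \<Rightarrow> 'x \<Rightarrow> complex" where
  "gram_defect V' \<sigma> s x t y =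
     vinner V' (\<sigma> s x) (\<sigma> t y) - sg s * sg t * vinner V' (\<sigma> s x) (\<sigma> t y)"

definition oracle_form ::
  "'h set \<Rightarrow> 'w set \<Rightarrow> ('x \<Rightarrow> 'h \<Rightarrow> 'h \<Rightarrow> complex) \<Rightarrow> 'x \<Rightarrow> 'x
    \<Rightarrow> ('h \<times> 'w \<Rightarrow> complex) \<Rightarrow> ('h \<times> 'w \<Rightarrow> complex) \<Rightarrow> complex" where
  "oracle_form HI WI Or x y v u =
     vinner (HI \<times> WI) v
       (tensor_id_apply HI (\<lambda>i k. (if i = k then 1 else 0) - adj_mult HI (Or x) (Or y) i k) u)"

lemma feasible_solution_iff:
  "feasible_solution V' HI D \<sigma> Or WI w \<longleftrightarrow>
     finite WI \<and>
     (\<forall>x\<in>D. \<forall>y\<in>D. \<forall>s t. gram_defect V' \<sigma> s x t y = oracle_form HI WI Or x y (w s x) (w t y))"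
  by (simp add: feasible_solution_def gram_defect_def oracle_form_def)

lemma gram_defect_same_sign: "gram_defect V' \<sigma> s x s y = 0"
  by (simp add: gram_defect_def sg_def)

lemma gram_defect_opposite_signs: "s \<noteq> t \<Longrightarrow> gram_defect V' \<sigma> s x t y = 2 * vinner V' (\<sigma> s x) (\<sigma> t y)"
  by (cases s) (simp_all add: gram_defect_def sg_def)

lemma vinner_commute: "vinner I a b = cnj (vinner I b a)"
  by (simp add: vinner_def mult.commute)

lemma sum_Sigma_eq_block:
  assumes "finite E" "\<forall>e\<in>E. finite (A e)" "e \<in> E"
    and "\<And>e' k. e' \<noteq> e \<Longrightarrow> F (e', k) = 0"
  shows "(\<Sum>p\<in>Sigma E A. F p) = (\<Sum>k\<in>A e. F (e, k))"
proof -
  have "(\<Sum>p\<in>Sigma E A. F p) = (\<Sum>e'\<in>E. \<Sum>k\<in>A e'. F (e', k))"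
    using assms by (simp add: sum.Sigma)
  also have "\<dots> = (\<Sum>e'\<in>E. if e' = e then (\<Sum>k\<in>A e. F (e, k)) else 0)"
    by (rule sum.cong) (auto simp: assms(4))
  also have "\<dots> = (\<Sum>k\<in>A e. F (e, k))"
    using assms by simp
  finally show ?thesis .
qed

lemma sum_Sigma_times_Sigma_diagonal:
  assumes "finite E" "\<forall>e\<in>E. finite (A e)" "\<forall>e\<in>E. finite (B e)"
    and "\<And>e i e' a. e \<noteq> e' \<Longrightarrow> f ((e, i), (e', a)) = 0"
  shows "(\<Sum>p\<in>Sigma E A \<times> Sigma E B. f p) = (\<Sum>e\<in>E. \<Sum>(i, a)\<in>A e \<times> B e. f ((e, i), (e, a)))"
proof -
  have "(\<Sum>p\<in>Sigma E A \<times> Sigma E B. f p) = (\<Sum>p\<in>Sigma E A. \<Sum>q\<in>Sigma E B. f (p, q))"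
    by (simp add: sum.cartesian_product)
  also have "\<dots> = (\<Sum>p\<in>Sigma E A. \<Sum>a\<in>B (fst p). f (p, (fst p, a)))"
  proof (intro sum.cong refl)
    fix p assume "p \<in> Sigma E A"
    then show "(\<Sum>q\<in>Sigma E B. f (p, q)) = (\<Sum>a\<in>B (fst p). f (p, (fst p, a)))"
      using assms by (intro sum_Sigma_eq_block) (auto simp: prod_eq_iff)
  qed
  also have "\<dots> = (\<Sum>e\<in>E. \<Sum>i\<in>A e. \<Sum>a\<in>B e. f ((e, i), (e, a)))"
    using assms(1,2) by (simp add: sum.Sigma split_def)
  also have "\<dots> = (\<Sum>e\<in>E. \<Sum>(i, a)\<in>A e \<times> B e. f ((e, i), (e, a)))"
    by (simp add: sum.cartesian_product)
  finally show ?thesis .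
qed

lemma sum_incident_edges_swap:
  assumes "finite V" "finite E" "\<forall>e\<in>E. N e \<subseteq> V"
  shows "(\<Sum>v\<in>V. \<Sum>e\<in>{e\<in>E. v \<in> N e}. h e v) = (\<Sum>e\<in>E. \<Sum>v\<in>N e. h e v)"
proof -
  have "(\<Sum>v\<in>V. \<Sum>e\<in>{e\<in>E. v \<in> N e}. h e v) = (\<Sum>e\<in>E. \<Sum>v\<in>{v\<in>V. v \<in> N e}. h e v)"
    by (rule sum.swap_restrict[symmetric, OF assms(2,1)])
  also have "\<dots> = (\<Sum>e\<in>E. \<Sum>v\<in>N e. h e v)"
    using assms(3) by (intro sum.cong refl arg_cong2[where f = sum]) auto
  finally show ?thesis .
qed

lemma vinner_incidence_sum:
  assumes "finite V" "finite E" "\<forall>e\<in>E. N e \<subseteq> V" "B \<subseteq> V"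
    and "d = (\<lambda>v. \<Sum>e\<in>{e\<in>E. v \<in> N e}. de e v)" and "\<forall>v\<in>V - B. d v = 0"
  shows "vinner B d g = (\<Sum>e\<in>E. vinner (N e) (de e) g)"
proof -
  have "vinner B d g = (\<Sum>v\<in>V. cnj (d v) * g v)"
    unfolding vinner_def using assms(1,4,6) by (intro sum.mono_neutral_left) auto
  also have "\<dots> = (\<Sum>v\<in>V. \<Sum>e\<in>{e\<in>E. v \<in> N e}. cnj (de e v) * g v)"
    by (simp add: assms(5) sum_distrib_right)
  also have "\<dots> = (\<Sum>e\<in>E. vinner (N e) (de e) g)"
    unfolding vinner_def by (rule sum_incident_edges_swap[OF assms(1-3)])
  finally show ?thesis .
qed

lemma vinner_delta_U_boundary:
  assumes "finite V" "finite E" "\<forall>e\<in>E. N e \<subseteq> V" "B \<subseteq> V"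
    and "\<delta> = (\<lambda>x v. \<Sum>e\<in>{e\<in>E. v \<in> N e}. \<delta>e e x v)" "\<forall>v\<in>V - B. \<delta> x v = 0"
    and "\<forall>e\<in>E. \<forall>v\<in>N e. Ue e y v = U y v"
  shows "vinner B (\<delta> x) (U y) = (\<Sum>e\<in>E. vinner (N e) (\<delta>e e x) (Ue e y))"
proof -
  have "vinner B (\<delta> x) (U y) = (\<Sum>e\<in>E. vinner (N e) (\<delta>e e x) (U y))"
    using assms(1-6) by (intro vinner_incidence_sum) auto
  also have "\<dots> = (\<Sum>e\<in>E. vinner (N e) (\<delta>e e x) (Ue e y))"
    unfolding vinner_def using assms(7) by (intro sum.cong refl) auto
  finally show ?thesis .
qed

lemma gram_defect_boundary:
  assumes "finite V" "finite E" "\<forall>e\<in>E. N e \<subseteq> V" "B \<subseteq> V"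
    and "\<delta> = (\<lambda>x v. \<Sum>e\<in>{e\<in>E. v \<in> N e}. \<delta>e e x v)"
    and "\<forall>v\<in>V - B. \<delta> x v = 0" "\<forall>v\<in>V - B. \<delta> y v = 0"
    and "\<forall>e\<in>E. \<forall>v\<in>N e. Ue e x v = U x v" "\<forall>e\<in>E. \<forall>v\<in>N e. Ue e y v = U y v"
  shows "gram_defect B (\<lambda>s. if s then \<delta> else U) s x t y
       = (\<Sum>e\<in>E. gram_defect (N e) (\<lambda>s. if s then \<delta>e e else Ue e) s x t y)"
proof (cases "s = t")
  case True
  then show ?thesis by (simp add: gram_defect_same_sign)
next
  case False
  then show ?thesis
    using vinner_delta_U_boundary[OF assms(1-5), where x = x and y = y]
      vinner_delta_U_boundary[OF assms(1-5), where x = y and y = x] assms(6-9)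
    by (cases s) (simp_all add: gram_defect_opposite_signs sum_distrib_left
        vinner_commute[of B "U x"] vinner_commute[of "N _" "Ue _ x"])
qed

lemma dsum_op_involution:
  assumes "finite E" "\<forall>e\<in>E. finite (HI e)"
    and "\<forall>e\<in>E. \<forall>i\<in>HI e. \<forall>k\<in>HI e. (\<Sum>j\<in>HI e. Or e x i j * Or e x j k) = (if i = k then 1 else 0)"
  shows "\<forall>p\<in>Sigma E HI. \<forall>q\<in>Sigma E HI.
           (\<Sum>r\<in>Sigma E HI. dsum_op Or x p r * dsum_op Or x r q) = (if p = q then 1 else 0)"
proof (intro ballI)
  fix p q assume "p \<in> Sigma E HI" "q \<in> Sigma E HI"
  then obtain e i e' k where p: "p = (e, i)" "e \<in> E" "i \<in> HI e" and q: "q = (e', k)" "e' \<in> E" "k \<in> HI e'"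
    by auto
  have "(\<Sum>r\<in>Sigma E HI. dsum_op Or x p r * dsum_op Or x r q)
      = (\<Sum>j\<in>HI e. dsum_op Or x (e, i) (e, j) * dsum_op Or x (e, j) (e', k))"
    unfolding p q by (rule sum_Sigma_eq_block[OF assms(1,2) p(2)]) (simp add: dsum_op_def)
  also have "\<dots> = (if p = q then 1 else 0)"
    using assms(3) p q by (cases "e = e'") (simp_all add: dsum_op_def)
  finally show "(\<Sum>r\<in>Sigma E HI. dsum_op Or x p r * dsum_op Or x r q) = (if p = q then 1 else 0)" .
qed

lemma adj_mult_dsum_op:
  assumes "finite E" "\<forall>e\<in>E. finite (HI e)" "e \<in> E"
  shows "adj_mult (Sigma E HI) (dsum_op Or x) (dsum_op Or y) (e, i) (e, k) = adj_mult (HI e) (Or e x) (Or e y) i k"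
  unfolding adj_mult_def
  by (subst sum_Sigma_eq_block[OF assms]) (simp_all add: dsum_op_def)

lemma tensor_id_apply_dsum_vec:
  assumes "finite E" "\<forall>e\<in>E. finite (HI e)" "e \<in> E"
  shows "tensor_id_apply (Sigma E HI) M (dsum_vec w t y) ((e, i), (e, a))
       = tensor_id_apply (HI e) (\<lambda>i k. M (e, i) (e, k)) (w e t y) (i, a)"
  unfolding tensor_id_apply_def prod.case
  by (subst sum_Sigma_eq_block[OF assms]) (simp_all add: dsum_vec_def)

lemma vinner_dsum_vec:
  assumes "finite E" "\<forall>e\<in>E. finite (HI e)" "\<forall>e\<in>E. finite (WI e)"
  shows "vinner (Sigma E HI \<times> Sigma E WI) (dsum_vec w s x) f
       = (\<Sum>e\<in>E. vinner (HI e \<times> WI e) (w e s x) (\<lambda>(i, a). f ((e, i), (e, a))))"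
  unfolding vinner_def
  by (subst sum_Sigma_times_Sigma_diagonal[OF assms]) (simp_all add: dsum_vec_def split_def)

lemma oracle_form_dsum:
  assumes "finite E" "\<forall>e\<in>E. finite (HI e)" "\<forall>e\<in>E. finite (WI e)"
  shows "oracle_form (Sigma E HI) (Sigma E WI) (dsum_op Or) x y (dsum_vec w s x) (dsum_vec w t y)
       = (\<Sum>e\<in>E. oracle_form (HI e) (WI e) (Or e) x y (w e s x) (w e t y))"
  unfolding oracle_form_def vinner_dsum_vec[OF assms]
  using assms(1,2)
  by (intro sum.cong refl) (simp add: split_def tensor_id_apply_dsum_vec adj_mult_dsum_op)

lemma wsize_dsum_vec:
  assumes "finite E" "\<forall>e\<in>E. finite (HI e)" "\<forall>e\<in>E. finite (WI e)"
  shows "wsize (Sigma E HI) (Sigma E WI) (dsum_vec w s x) = (\<Sum>e\<in>E. wsize (HI e) (WI e) (w e s x))"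
  unfolding wsize_def
  by (subst sum_Sigma_times_Sigma_diagonal[OF assms]) (simp_all add: dsum_vec_def split_def)

lemma state_reflection_problem_boundary_dsum:
  assumes finV: "finite V" and finE: "finite E" and NV: "\<forall>e\<in>E. N e \<subseteq> V" and BV: "B \<subseteq> V"
    and hyperedge: "\<forall>e\<in>E. hyperedge_problem (N e) (HI e) D (\<delta>e e) (Ue e) (Or e)"
    and \<delta>_def: "\<delta> = (\<lambda>x v. \<Sum>e\<in>{e\<in>E. v \<in> N e}. \<delta>e e x v)"
    and \<delta>_boundary: "\<forall>v\<in>V - B. \<forall>x\<in>D. \<delta> x v = 0"
    and U_restrict: "\<forall>e\<in>E. \<forall>x\<in>D. \<forall>v\<in>N e. Ue e x v = U x v"
  shows "state_reflection_problem B (Sigma E HI) D (\<lambda>s. if s then \<delta> else U) (dsum_op Or)"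
proof -
  have finHI: "\<forall>e\<in>E. finite (HI e)"
    and orthogonal: "\<forall>e\<in>E. \<forall>x\<in>D. vinner (N e) (\<delta>e e x) (Ue e x) = 0"
    and involution: "\<forall>x\<in>D. \<forall>e\<in>E. \<forall>i\<in>HI e. \<forall>k\<in>HI e.
                       (\<Sum>j\<in>HI e. Or e x i j * Or e x j k) = (if i = k then 1 else 0)"
    using hyperedge by (auto simp: hyperedge_problem_def state_reflection_problem_def)
  show ?thesis
    unfolding state_reflection_problem_def
  proof (intro conjI ballI)
    show "finite B"
      using BV finV by (rule finite_subset)
    show "finite (Sigma E HI)"
      using finE finHI by auto
  next
    fix x assume "x \<in> D"
    have "vinner B (\<delta> x) (U x) = (\<Sum>e\<in>E. vinner (N e) (\<delta>e e x) (Ue e x))"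
      using \<delta>_boundary U_restrict \<open>x \<in> D\<close> by (intro vinner_delta_U_boundary[OF finV finE NV BV \<delta>_def]) auto
    then show "vinner B ((if True then \<delta> else U) x) ((if False then \<delta> else U) x) = 0"
      using orthogonal \<open>x \<in> D\<close> by simp
  next
    fix x p q assume "x \<in> D" "p \<in> Sigma E HI" "q \<in> Sigma E HI"
    then show "(\<Sum>r\<in>Sigma E HI. dsum_op Or x p r * dsum_op Or x r q) = (if p = q then 1 else 0)"
      using dsum_op_involution[where Or = Or and x = x, OF finE finHI bspec[OF involution \<open>x \<in> D\<close>]] by blast
  qed
qed

lemma feasible_solution_boundary_dsum:
  assumes finV: "finite V" and finE: "finite E" and NV: "\<forall>e\<in>E. N e \<subseteq> V" and BV: "B \<subseteq> V"
    and finHI: "\<forall>e\<in>E. finite (HI e)"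
    and \<delta>_def: "\<delta> = (\<lambda>x v. \<Sum>e\<in>{e\<in>E. v \<in> N e}. \<delta>e e x v)"
    and \<delta>_boundary: "\<forall>v\<in>V - B. \<forall>x\<in>D. \<delta> x v = 0"
    and U_restrict: "\<forall>e\<in>E. \<forall>x\<in>D. \<forall>v\<in>N e. Ue e x v = U x v"
    and feasible_e: "\<forall>e\<in>E. feasible_solution (N e) (HI e) D (\<lambda>s. if s then \<delta>e e else Ue e) (Or e) (WI e) (w e)"
  shows "feasible_solution B (Sigma E HI) D (\<lambda>s. if s then \<delta> else U) (dsum_op Or) (Sigma E WI) (dsum_vec w)"
proof -
  have finWI: "\<forall>e\<in>E. finite (WI e)"
    and feasible: "\<forall>e\<in>E. \<forall>x\<in>D. \<forall>y\<in>D. \<forall>s t. gram_defect (N e) (\<lambda>s. if s then \<delta>e e else Ue e) s x t y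
                     = oracle_form (HI e) (WI e) (Or e) x y (w e s x) (w e t y)"
    using feasible_e by (auto simp: feasible_solution_iff)
  show ?thesis
    unfolding feasible_solution_iff
  proof (intro conjI ballI allI)
    show "finite (Sigma E WI)"
      using finE finWI by auto
  next
    fix x y s t assume xy: "x \<in> D" "y \<in> D"
    have "gram_defect B (\<lambda>s. if s then \<delta> else U) s x t y
        = (\<Sum>e\<in>E. gram_defect (N e) (\<lambda>s. if s then \<delta>e e else Ue e) s x t y)"
      using \<delta>_boundary U_restrict xy by (intro gram_defect_boundary[OF finV finE NV BV \<delta>_def]) auto
    also have "\<dots> = (\<Sum>e\<in>E. oracle_form (HI e) (WI e) (Or e) x y (w e s x) (w e t y))"
      using feasible xy by (intro sum.cong) auto
    also have "\<dots> = oracle_form (Sigma E HI) (Sigma E WI) (dsum_op Or) x y (dsum_vec w s x) (dsum_vec w t y)"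
      by (rule oracle_form_dsum[OF finE finHI finWI, symmetric])
    finally show "gram_defect B (\<lambda>s. if s then \<delta> else U) s x t y
        = oracle_form (Sigma E HI) (Sigma E WI) (dsum_op Or) x y (dsum_vec w s x) (dsum_vec w t y)" .
  qed
qed

theorem theorem5p7:
  fixes V :: "'v set" and E :: "'e set" and N :: "'e \<Rightarrow> 'v set" and B :: "'v set"
    and D :: "'x set"
    and \<delta>e :: "'e \<Rightarrow> 'x \<Rightarrow> 'v \<Rightarrow> complex" and Ue :: "'e \<Rightarrow> 'x \<Rightarrow> 'v \<Rightarrow> complex"
    and HI :: "'e \<Rightarrow> 'h set" and Or :: "'e \<Rightarrow> 'x \<Rightarrow> 'h \<Rightarrow> 'h \<Rightarrow> complex"
    and WI :: "'e \<Rightarrow> 'w set" and w :: "'e \<Rightarrow> bool \<Rightarrow> 'x \<Rightarrow> 'h \<times> 'w \<Rightarrow> complex"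
    and U :: "'x \<Rightarrow> 'v \<Rightarrow> complex"
    and \<delta> :: "'x \<Rightarrow> 'v \<Rightarrow> complex"
  assumes finV: "finite V" and finE: "finite E" and NV: "\<forall>e\<in>E. N e \<subseteq> V" and BV: "B \<subseteq> V" and "finite D"
    and hyperedge: "\<forall>e\<in>E. hyperedge_problem (N e) (HI e) D (\<delta>e e) (Ue e) (Or e)"
    and \<delta>_def: "\<delta> = (\<lambda>x v. \<Sum>e\<in>{e\<in>E. v \<in> N e}. \<delta>e e x v)"
    and \<delta>_boundary: "\<forall>v\<in>V - B. \<forall>x\<in>D. \<delta> x v = 0"
    and U_restrict: "\<forall>e\<in>E. \<forall>x\<in>D. \<forall>v\<in>N e. Ue e x v = U x v"
    and feasible_e: "\<forall>e\<in>E. feasible_solution (N e) (HI e) D (\<lambda>s. if s then \<delta>e e else Ue e) (Or e) (WI e) (w e)"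
  shows "state_reflection_problem B (Sigma E HI) D (\<lambda>s. if s then \<delta> else U) (dsum_op Or)
       \<and> feasible_solution B (Sigma E HI) D (\<lambda>s. if s then \<delta> else U) (dsum_op Or) (Sigma E WI) (dsum_vec w)
       \<and> (\<forall>x\<in>D. \<forall>s. wsize (Sigma E HI) (Sigma E WI) (dsum_vec w s x)
                      = (\<Sum>e\<in>E. wsize (HI e) (WI e) (w e s x)))"
proof -
  have finHI: "\<forall>e\<in>E. finite (HI e)" and finWI: "\<forall>e\<in>E. finite (WI e)"
    using hyperedge feasible_e by (auto simp: hyperedge_problem_def state_reflection_problem_def feasible_solution_def)
  show ?thesis
    using state_reflection_problem_boundary_dsum[OF finV finE NV BV hyperedge \<delta>_def \<delta>_boundary U_restrict]
      feasible_solution_boundary_dsum[OF finV finE NV BV finHI \<delta>_def \<delta>_boundary U_restrict feasible_e]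
    by (simp add: wsize_dsum_vec[OF finE finHI finWI])
qed

end
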